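(* Let $p$ be a prime, $q=p^m$, $\pi\in\mathbb C_p$ a root of $X^{p-1}+p$, and write $\exp(\pi X-\pi X^q)=\sum_{n\ge0}\lambda^{(m)}_nX^n$. Then in $\mathbb Z_p[\zeta_p]$: if $0\le n\le q-1$, $\lambda^{(m)}_n\equiv\frac{\pi^{s_p(n)}}{n!!}\mod\pi^{s_p(n)+p-1}$; if $n\ge q$, $\lambda^{(m)}_n\equiv0\mod\pi^{s_p(n)+p-1}$.
   Context: For $n=n_0+n_1p+\dots+n_tp^t$ with $0\le n_i\le p-1$, $s_p(n)=n_0+\dots+n_t$ and $n!!=n_0!\,n_1!\cdots n_t!$. Note $\mathbb Q_p(\pi)=\mathbb Q_p(\zeta_p)$ and $\pi$ generates the maximal ideal of $\mathbb Z_p[\zeta_p]$. *)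

theory Defs
  imports "HOL-Computational_Algebra.Computational_Algebra"
begin

text \<open>Base-p digit sum s_p(n): digit i of n is (n div p^i) mod p; digits with
  index > n vanish for p >= 2.\<close>
definition digit_sum :: "nat \<Rightarrow> nat \<Rightarrow> nat" where
  "digit_sum p n = (\<Sum>i<Suc n. (n div p ^ i) mod p)"

text \<open>n!! = product of the factorials of the base-p digits of n.\<close>
definition digit_fact :: "nat \<Rightarrow> nat \<Rightarrow> nat" where
  "digit_fact p n = (\<Prod>i<Suc n. fact ((n div p ^ i) mod p))"

definition lam :: "nat \<Rightarrow> nat \<Rightarrow> 'a::field_char_0 \<Rightarrow> nat \<Rightarrow> 'a" where
  "lam p m varpi n =
     fps_nth (fps_compose (fps_exp 1)
       (fps_const varpi * fps_X - fps_const varpi * fps_X ^ (p ^ m))) n"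

definition loc_int :: "nat \<Rightarrow> rat \<Rightarrow> bool" where
  "loc_int p r \<longleftrightarrow> \<not> int p dvd snd (quotient_of r)"

text \<open>a \<equiv> b mod varpi^k in Z_p[varpi] = Z_p[zeta_p], for a, b in Q(varpi):
  a - b = varpi^k * f(varpi) with f a polynomial with coefficients in Z_(p)
  (note Z_p[varpi] \<inter> Q(varpi) = Z_(p)[varpi]).\<close>
definition pcong :: "nat \<Rightarrow> 'a::field_char_0 \<Rightarrow> nat \<Rightarrow> 'a \<Rightarrow> 'a \<Rightarrow> bool" where
  "pcong p varpi k a b \<longleftrightarrow>
     (\<exists>f :: rat poly. (\<forall>i. loc_int p (coeff f i)) \<and>
        a - b = varpi ^ k * poly (map_poly of_rat f) varpi)"

end

theory Submission
  imports Defs "HOL-Number_Theory.Residues"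
begin

text \<open>Write E_m = exp(\<pi>X - \<pi>X^(p^m)) and \<theta> = exp(\<pi>X - \<pi>X^p). Then
  E_(m+1)(X) = \<theta>(X) E_m(X^p), so \<lambda>^(m+1)_n = \<Sum>_j \<theta>_(n-pj) \<lambda>^(m)_j and the claim follows
  by induction on m. The term j = n div p carries the main term, because \<theta>_k = \<pi>^k/k! for
  k < p; the other terms are negligible because \<theta>_k \<equiv> 0 mod \<pi>^(s_p(k)+p-1) for k \<ge> p and
  s_p is subadditive. For this bound write k = k_0 + pJ: the factor \<pi>^J/J! has valuation s_p(J)
  by Legendre's formula and \<pi>^(p-1) = -p, and what remains is a rational number which
  Wilson's theorem reduces, modulo p, to a multiple of \<Sum>_j (-1)^j (J choose j) = 0.\<close>

section \<open>The rings Z_(p) and Z_(p)[\<pi>]\<close>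

lemma loc_int_iff:
  assumes "prime p"
  shows "loc_int p r \<longleftrightarrow> (\<exists>a b. \<not> int p dvd b \<and> r = of_int a / of_int b)"
proof
  assume "loc_int p r"
  then show "\<exists>a b. \<not> int p dvd b \<and> r = of_int a / of_int b"
    unfolding loc_int_def by (metis prod.collapse quotient_of_div)
next
  assume "\<exists>a b. \<not> int p dvd b \<and> r = of_int a / of_int b"
  then obtain a b where b: "\<not> int p dvd b" and r: "r = of_int a / of_int b" by blast
  obtain n d where nd: "quotient_of r = (n, d)" by (cases "quotient_of r")
  have "d dvd b"
  proof -
    have "of_int n / of_int d = (of_int a / of_int b :: rat)"
      using nd r quotient_of_div by simp
    moreover have "b \<noteq> 0" "d \<noteq> 0"
      using b quotient_of_denom_pos[OF nd] by auto
    ultimately have "of_int (a * d) = (of_int (n * b) :: rat)"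
      by (simp add: frac_eq_eq)
    then have "a * d = n * b"
      by (simp only: of_int_eq_iff)
    then show ?thesis
      using quotient_of_coprime[OF nd] by (metis coprime_commute coprime_dvd_mult_right_iff dvd_triv_right)
  qed
  then show "loc_int p r"
    using b nd dvd_trans unfolding loc_int_def by fastforce
qed

context
  fixes p :: nat
  assumes p: "prime p"
begin

lemma loc_int_of_int_divide: "\<not> int p dvd b \<Longrightarrow> loc_int p (of_int a / of_int b)"
  using loc_int_iff[OF p] by blast

lemma loc_int_of_int: "loc_int p (of_int a)"
  using loc_int_of_int_divide[of 1 a] p by (simp add: prime_nat_iff)

lemma loc_int_0: "loc_int p 0"
  and loc_int_1: "loc_int p 1"
  using loc_int_of_int[of 0] loc_int_of_int[of 1] by simp_all

lemma loc_int_of_nat: "loc_int p (of_nat a)"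
  using loc_int_of_int[of "int a"] by simp

lemma loc_int_inverse_of_nat: "\<not> p dvd b \<Longrightarrow> loc_int p (1 / of_nat b)"
  using loc_int_of_int_divide[of "int b" 1] by simp

lemma loc_int_add: "loc_int p x \<Longrightarrow> loc_int p y \<Longrightarrow> loc_int p (x + y)"
  and loc_int_mult: "loc_int p x \<Longrightarrow> loc_int p y \<Longrightarrow> loc_int p (x * y)"
proof -
  assume "loc_int p x" "loc_int p y"
  then obtain a b c d where
    bd: "\<not> int p dvd b" "\<not> int p dvd d" and xy: "x = of_int a / of_int b" "y = of_int c / of_int d"
    using loc_int_iff[OF p] by meson
  have ndvd: "\<not> int p dvd b * d"
    using bd p by (simp add: prime_dvd_mult_iff)
  have "b \<noteq> 0" "d \<noteq> 0" using bd by auto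
  then have "x + y = of_int (a * d + c * b) / of_int (b * d)" "x * y = of_int (a * c) / of_int (b * d)"
    using xy by (simp_all add: field_simps)
  then show "loc_int p (x + y)" "loc_int p (x * y)"
    using loc_int_of_int_divide[OF ndvd, of "a * d + c * b"] loc_int_of_int_divide[OF ndvd, of "a * c"]
    by simp_all
qed

lemma loc_int_minus: "loc_int p x \<Longrightarrow> loc_int p (- x)"
  using loc_int_mult[OF loc_int_of_int[of "-1"]] by simp

lemma loc_int_power: "loc_int p x \<Longrightarrow> loc_int p (x ^ n)"
  by (induction n) (auto intro: loc_int_mult loc_int_1)

lemma loc_int_sum: "(\<And>i. i \<in> S \<Longrightarrow> loc_int p (f i)) \<Longrightarrow> loc_int p (sum f S)"
  by (induction S rule: infinite_finite_induct) (auto intro: loc_int_add loc_int_0)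

end

lemma map_poly_of_rat_add:
  "map_poly (of_rat :: rat \<Rightarrow> 'a::field_char_0) (f + g) = map_poly of_rat f + map_poly of_rat g"
  by (rule poly_eqI) (simp add: coeff_map_poly of_rat_add)

lemma map_poly_of_rat_mult:
  "map_poly (of_rat :: rat \<Rightarrow> 'a::field_char_0) (f * g) = map_poly of_rat f * map_poly of_rat g"
  by (induction f) (simp_all add: map_poly_of_rat_add map_poly_smult map_poly_pCons mult_pCons_left of_rat_mult)

definition loc_alg_int :: "nat \<Rightarrow> 'a::field_char_0 \<Rightarrow> 'a \<Rightarrow> bool" where
  "loc_alg_int p w x \<longleftrightarrow>
     (\<exists>f :: rat poly. (\<forall>i. loc_int p (Polynomial.coeff f i)) \<and> x = poly (map_poly of_rat f) w)"

definition pow_dvd :: "nat \<Rightarrow> 'a::field_char_0 \<Rightarrow> nat \<Rightarrow> 'a \<Rightarrow> bool" where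
  "pow_dvd p w k x \<longleftrightarrow> (\<exists>y. loc_alg_int p w y \<and> x = w ^ k * y)"

lemma pcong_iff_pow_dvd: "pcong p w k a b \<longleftrightarrow> pow_dvd p w k (a - b)"
  unfolding pcong_def pow_dvd_def loc_alg_int_def by blast

context
  fixes p :: nat and w :: "'a::field_char_0"
  assumes p: "prime p"
begin

lemma loc_alg_int_of_rat: "loc_int p r \<Longrightarrow> loc_alg_int p w (of_rat r)"
  unfolding loc_alg_int_def
  by (rule exI[of _ "[:r:]"]) (auto simp: coeff_pCons map_poly_pCons loc_int_0[OF p] split: nat.split)

lemma loc_alg_int_base: "loc_alg_int p w w"
  unfolding loc_alg_int_def
  by (rule exI[of _ "[:0, 1:]"])
     (auto simp: coeff_pCons map_poly_pCons loc_int_0[OF p] loc_int_1[OF p] split: nat.split)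

lemma loc_alg_int_add: "loc_alg_int p w x \<Longrightarrow> loc_alg_int p w y \<Longrightarrow> loc_alg_int p w (x + y)"
  and loc_alg_int_mult: "loc_alg_int p w x \<Longrightarrow> loc_alg_int p w y \<Longrightarrow> loc_alg_int p w (x * y)"
proof -
  assume "loc_alg_int p w x" "loc_alg_int p w y"
  then obtain f g where
    fg: "\<And>i. loc_int p (Polynomial.coeff f i)" "\<And>i. loc_int p (Polynomial.coeff g i)" and
    xy: "x = poly (map_poly of_rat f) w" "y = poly (map_poly of_rat g) w"
    unfolding loc_alg_int_def by blast
  have "loc_int p (Polynomial.coeff (f + g) i)" "loc_int p (Polynomial.coeff (f * g) i)" for i
    unfolding coeff_add coeff_mult using fg by (auto intro!: loc_int_add[OF p] loc_int_sum[OF p] loc_int_mult[OF p])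
  moreover have "x + y = poly (map_poly of_rat (f + g)) w" "x * y = poly (map_poly of_rat (f * g)) w"
    unfolding xy map_poly_of_rat_add map_poly_of_rat_mult by simp_all
  ultimately show "loc_alg_int p w (x + y)" "loc_alg_int p w (x * y)"
    unfolding loc_alg_int_def by blast+
qed

lemma loc_alg_int_power: "loc_alg_int p w (w ^ n)"
  using loc_alg_int_of_rat[OF loc_int_1[OF p]]
  by (induction n) (auto intro: loc_alg_int_mult loc_alg_int_base)

lemma pow_dvd_of_rat: "loc_int p r \<Longrightarrow> pow_dvd p w k (w ^ k * of_rat r)"
  unfolding pow_dvd_def using loc_alg_int_of_rat by blast

lemma pow_dvd_power: "pow_dvd p w k (w ^ k)"
  using pow_dvd_of_rat[OF loc_int_1[OF p]] by simp

lemma pow_dvd_0: "pow_dvd p w k 0"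
  using pow_dvd_of_rat[OF loc_int_0[OF p]] by simp

lemma pow_dvd_add:
  assumes "pow_dvd p w k x" "pow_dvd p w k y"
  shows "pow_dvd p w k (x + y)"
proof -
  obtain a b where "loc_alg_int p w a" "x = w ^ k * a" "loc_alg_int p w b" "y = w ^ k * b"
    using assms unfolding pow_dvd_def by blast
  moreover from this have "x + y = w ^ k * (a + b)"
    by (simp add: distrib_left)
  ultimately show ?thesis
    unfolding pow_dvd_def using loc_alg_int_add by blast
qed

lemma pow_dvd_mult:
  assumes "pow_dvd p w k x" "pow_dvd p w l y"
  shows "pow_dvd p w (k + l) (x * y)"
proof -
  obtain a b where "loc_alg_int p w a" "x = w ^ k * a" "loc_alg_int p w b" "y = w ^ l * b"
    using assms unfolding pow_dvd_def by blast
  moreover from this have "x * y = w ^ (k + l) * (a * b)"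
    by (simp add: power_add mult_ac)
  ultimately show ?thesis
    unfolding pow_dvd_def using loc_alg_int_mult by blast
qed

lemma pow_dvd_mono:
  assumes "l \<le> k" "pow_dvd p w k x"
  shows "pow_dvd p w l x"
proof -
  obtain y where y: "loc_alg_int p w y" "x = w ^ k * y"
    using assms(2) unfolding pow_dvd_def by blast
  then have "x = w ^ l * (w ^ (k - l) * y)"
    using assms(1) by (simp add: mult.assoc flip: power_add)
  then show ?thesis
    unfolding pow_dvd_def using loc_alg_int_mult[OF loc_alg_int_power y(1)] by blast
qed

lemma pow_dvd_sum: "(\<And>i. i \<in> S \<Longrightarrow> pow_dvd p w k (f i)) \<Longrightarrow> pow_dvd p w k (sum f S)"
  by (induction S rule: infinite_finite_induct) (auto intro: pow_dvd_add pow_dvd_0)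

end

section \<open>Digit sums and factorials\<close>

lemma digit_eq_0_if_less:
  assumes "2 \<le> p" "n < i"
  shows "(n div p ^ i) mod p = 0"
proof -
  have "n < 2 ^ n" by (rule less_exp)
  also have "\<dots> \<le> 2 ^ i" using assms(2) by (simp add: power_increasing)
  also have "\<dots> \<le> p ^ i" using assms(1) by (simp add: power_mono)
  finally show ?thesis by simp
qed

lemma digit_sum_eq_sum:
  assumes "2 \<le> p" "n \<le> N"
  shows "digit_sum p n = (\<Sum>i<Suc N. (n div p ^ i) mod p)"
  unfolding digit_sum_def
proof (rule sum.mono_neutral_left)
  show "\<forall>i\<in>{..<Suc N} - {..<Suc n}. (n div p ^ i) mod p = 0"
  proof
    fix i assume "i \<in> {..<Suc N} - {..<Suc n}"
    then show "(n div p ^ i) mod p = 0" using digit_eq_0_if_less[OF assms(1)] by simp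
  qed
qed (use assms in auto)

lemma digit_fact_eq_prod:
  assumes "2 \<le> p" "n \<le> N"
  shows "digit_fact p n = (\<Prod>i<Suc N. fact ((n div p ^ i) mod p))"
  unfolding digit_fact_def
proof (rule prod.mono_neutral_left)
  show "\<forall>i\<in>{..<Suc N} - {..<Suc n}. fact ((n div p ^ i) mod p) = (1::nat)"
  proof
    fix i assume "i \<in> {..<Suc N} - {..<Suc n}"
    then show "fact ((n div p ^ i) mod p) = (1::nat)" using digit_eq_0_if_less[OF assms(1)] by simp
  qed
qed (use assms in auto)

lemma digit_sum_mod_div:
  assumes "2 \<le> p"
  shows "digit_sum p n = n mod p + digit_sum p (n div p)"
proof -
  have "digit_sum p n = (\<Sum>i<Suc (Suc n). (n div p ^ i) mod p)"
    by (rule digit_sum_eq_sum[OF assms]) simp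
  also have "\<dots> = n mod p + (\<Sum>i<Suc n. (n div p div p ^ i) mod p)"
    by (subst sum.lessThan_Suc_shift) (simp add: div_mult2_eq)
  also have "(\<Sum>i<Suc n. (n div p div p ^ i) mod p) = digit_sum p (n div p)"
    by (rule digit_sum_eq_sum[OF assms div_le_dividend, symmetric])
  finally show ?thesis .
qed

lemma digit_fact_mod_div:
  assumes "2 \<le> p"
  shows "digit_fact p n = fact (n mod p) * digit_fact p (n div p)"
proof -
  have "digit_fact p n = (\<Prod>i<Suc (Suc n). fact ((n div p ^ i) mod p))"
    by (rule digit_fact_eq_prod[OF assms]) simp
  also have "\<dots> = fact (n mod p) * (\<Prod>i<Suc n. fact ((n div p div p ^ i) mod p))"
    by (subst prod.lessThan_Suc_shift) (simp add: div_mult2_eq)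
  also have "(\<Prod>i<Suc n. fact ((n div p div p ^ i) mod p)) = digit_fact p (n div p)"
    by (rule digit_fact_eq_prod[OF assms div_le_dividend, symmetric])
  finally show ?thesis .
qed

lemma digit_sum_less: "2 \<le> p \<Longrightarrow> n < p \<Longrightarrow> digit_sum p n = n"
  using digit_sum_mod_div[of p n] by (simp add: digit_sum_def)

lemma prime_not_dvd_digit_fact:
  assumes "prime p"
  shows "\<not> p dvd digit_fact p n"
proof -
  have "\<not> p dvd fact ((n div p ^ i) mod p)" for i
    using assms by (simp add: prime_dvd_fact_iff prime_gt_0_nat not_le)
  then show ?thesis
    unfolding digit_fact_def using assms by (simp add: prime_dvd_prod_iff del: prod.lessThan_Suc)
qed

lemma dvd_Suc_iff_Suc_mod: "p dvd Suc n \<longleftrightarrow> Suc (n mod p) = p"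
  by (simp add: dvd_eq_mod_eq_0 mod_Suc)

fun fact_coprime :: "nat \<Rightarrow> nat \<Rightarrow> nat" where
  "fact_coprime p 0 = 1"
| "fact_coprime p (Suc n) = (if p dvd Suc n then fact_coprime p n else Suc n * fact_coprime p n)"

lemma fact_eq_fact_coprime:
  assumes "2 \<le> p"
  shows "fact n = p ^ (n div p) * fact (n div p) * fact_coprime p n"
proof (induction n)
  case (Suc n)
  show ?case
  proof (cases "p dvd Suc n")
    case True
    then have "Suc (n mod p) = p" "Suc n div p = Suc (n div p)"
      using div_Suc[of n p] by (simp_all add: dvd_Suc_iff_Suc_mod)
    moreover have "Suc n = p * (n div p) + Suc (n mod p)"
      by simp
    ultimately have "Suc n = p * Suc (n div p)"
      by simp
    have "fact (Suc n) = Suc n * fact n"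
      by simp
    also have "\<dots> = p * Suc (n div p) * (p ^ (n div p) * fact (n div p) * fact_coprime p n)"
      by (simp only: \<open>Suc n = p * Suc (n div p)\<close> Suc.IH)
    also have "\<dots> = p ^ Suc (n div p) * fact (Suc (n div p)) * fact_coprime p n"
      by (simp add: algebra_simps)
    finally show ?thesis
      using True \<open>Suc n div p = Suc (n div p)\<close> by simp
  next
    case False
    then have "Suc n div p = n div p"
      using div_Suc[of n p] by (simp add: dvd_eq_mod_eq_0)
    then show ?thesis
      using Suc False by (simp add: algebra_simps)
  qed
qed simp

lemma prime_not_dvd_fact_coprime: "prime p \<Longrightarrow> \<not> p dvd fact_coprime p n"
  by (induction n) (simp_all add: prime_dvd_mult_iff prime_nat_iff del: mult_Suc)

text \<open>Wilson's theorem, applied to each complete block of p consecutive integers.\<close>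
lemma fact_coprime_cong:
  assumes "prime p"
  shows "[int (fact_coprime p n) = (-1) ^ (n div p) * fact (n mod p)] (mod p)"
proof (induction n)
  case (Suc n)
  show ?case
  proof (cases "p dvd Suc n")
    case True
    then have "n mod p = p - 1" "Suc n div p = Suc (n div p)" "Suc n mod p = 0"
      using div_Suc[of n p] by (simp_all add: dvd_Suc_iff_Suc_mod)
    moreover have "[(-1) ^ (n div p) * fact (p - 1) = (-1) ^ (n div p) * (-1 :: int)] (mod p)"
      using wilson_theorem[OF assms] by (rule cong_scalar_left)
    ultimately show ?thesis
      using Suc True by (auto intro: cong_trans)
  next
    case False
    then have "Suc n div p = n div p" "Suc n mod p = Suc (n mod p)"
      using div_Suc[of n p] mod_Suc[of n p] by (simp_all add: dvd_Suc_iff_Suc_mod)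
    moreover have "[int (Suc n) = int (Suc (n mod p))] (mod p)"
      by (metis \<open>Suc n mod p = Suc (n mod p)\<close> cong_def of_nat_mod mod_mod_trivial)
    then have "[int (Suc n) * int (fact_coprime p n) = int (Suc (n mod p)) * ((-1) ^ (n div p) * fact (n mod p))] (mod p)"
      using Suc by (rule cong_mult)
    ultimately show ?thesis
      using False by (simp add: algebra_simps)
  qed
qed simp

lemma multiplicity_fact:
  assumes "prime p"
  shows "multiplicity p (fact n) = n div p + multiplicity p (fact (n div p) :: nat)"
proof -
  have p: "2 \<le> p" "prime_elem p"
    using assms prime_ge_2_nat by auto
  have "multiplicity p (fact n) = multiplicity p (p ^ (n div p) * fact (n div p) * fact_coprime p n)"
    using fact_eq_fact_coprime[OF p(1)] by metis
  also have "\<dots> = n div p + multiplicity p (fact (n div p) :: nat)"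
  proof -
    have "\<not> p dvd fact_coprime p n"
      by (rule prime_not_dvd_fact_coprime[OF assms])
    moreover from this have "fact_coprime p n \<noteq> 0"
      by (metis dvd_0_right)
    ultimately show ?thesis
      using p by (simp add: prime_elem_multiplicity_mult_distrib not_dvd_imp_multiplicity_0)
  qed
  finally show ?thesis .
qed

lemma digit_sum_multiplicity_fact:
  assumes "prime p"
  shows "digit_sum p n + (p - 1) * multiplicity p (fact n :: nat) = n"
proof (induction n rule: less_induct)
  case (less n)
  have p: "2 \<le> p"
    using assms prime_ge_2_nat by auto
  show ?case
  proof (cases "n = 0")
    case False
    then have "digit_sum p (n div p) + (p - 1) * multiplicity p (fact (n div p) :: nat) = n div p"
      using less.IH p by simp
    moreover have "n mod p + (n div p + (p - 1) * (n div p)) = n"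
      using p by (simp add: algebra_simps)
    ultimately show ?thesis
      using digit_sum_mod_div[OF p, of n] multiplicity_fact[OF assms, of n] by (simp add: algebra_simps)
  qed (simp add: digit_sum_def)
qed

lemma digit_sum_add_le:
  assumes "prime p"
  shows "digit_sum p (a + b) \<le> digit_sum p a + digit_sum p b"
proof -
  have "fact a * fact b dvd (fact (a + b) :: nat)"
    by (metis add_diff_cancel_left' binomial_fact_lemma dvd_triv_left le_add1)
  then have "multiplicity p (fact a * fact b :: nat) \<le> multiplicity p (fact (a + b) :: nat)"
    by (rule dvd_imp_multiplicity_le) simp
  then have "multiplicity p (fact a :: nat) + multiplicity p (fact b :: nat) \<le> multiplicity p (fact (a + b) :: nat)"
    using assms by (simp add: prime_elem_multiplicity_mult_distrib)
  then have "(p - 1) * multiplicity p (fact a :: nat) + (p - 1) * multiplicity p (fact b :: nat)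
      \<le> (p - 1) * multiplicity p (fact (a + b) :: nat)"
    by (metis add_mult_distrib2 mult_le_mono2)
  then show ?thesis
    using digit_sum_multiplicity_fact[OF assms, of a] digit_sum_multiplicity_fact[OF assms, of b]
      digit_sum_multiplicity_fact[OF assms, of "a + b"] by linarith
qed

lemma loc_int_inverse_diff_div_prime:
  fixes a b :: int
  assumes p: "prime p" and a: "\<not> int p dvd a" and b: "\<not> int p dvd b" and ab: "[a = b] (mod p)"
  shows "loc_int p ((1 / of_int a - 1 / of_int b) / of_nat p)"
proof -
  obtain t where t: "b - a = int p * t"
    using ab by (metis cong_iff_dvd_diff cong_sym dvdE)
  have nz: "(of_int a :: rat) \<noteq> 0" "(of_int b :: rat) \<noteq> 0" "(of_nat p :: rat) \<noteq> 0"
    using a b p by auto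
  have "(1 / of_int a - 1 / of_int b) / of_nat p = ((of_int b - of_int a) / of_nat p) / (of_int a * of_int b :: rat)"
    using nz by (simp add: field_simps)
  also have "(of_int b - of_int a) / of_nat p = (of_int t :: rat)"
    using nz by (simp add: t flip: of_int_diff)
  finally have "(1 / of_int a - 1 / of_int b) / of_nat p = (of_int t / of_int (a * b) :: rat)"
    by simp
  moreover have "\<not> int p dvd a * b"
    using p a b by (simp add: prime_dvd_mult_iff)
  ultimately show ?thesis
    using loc_int_of_int_divide[OF p] by presburger
qed

text \<open>For k = k_0 + pJ the coefficient \<theta>_k is \<plusminus>\<pi>^(k_0+J) times this sum; modulo p it
  reduces to an alternating sum of binomial coefficients.\<close>
lemma loc_int_fact_sum_div_prime:
  assumes p: "prime p" and k0: "k0 < p" and J: "1 \<le> J"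
  shows "loc_int p (fact J * (\<Sum>j\<le>J. of_nat p ^ (J - j) / (fact (k0 + p * (J - j)) * fact j)) / of_nat p)"
proof -
  have p2: "2 \<le> p"
    using p prime_ge_2_nat by blast
  define D where "D i = (of_nat (fact_coprime p (k0 + p * i)) :: rat)" for i
  define e where "e i = (1 / D i - (-1) ^ i / fact k0) / of_nat p" for i
  have e: "loc_int p (e i)" for i
  proof -
    have "\<not> p dvd fact k0"
      using k0 p by (simp add: prime_dvd_fact_iff)
    then have "\<not> int p dvd fact k0"
      by (metis int_dvd_int_iff of_nat_fact)
    then have "\<not> int p dvd (-1) ^ i * fact k0"
      by (simp add: dvd_mult_unit_iff')
    moreover have "1 / of_int ((-1) ^ i * fact k0) = ((-1) ^ i / fact k0 :: rat)"
      by (cases "even i") simp_all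
    ultimately show ?thesis
      using loc_int_inverse_diff_div_prime[OF p _ _ fact_coprime_cong[OF p, of "k0 + p * i"]]
        prime_not_dvd_fact_coprime[OF p] k0 unfolding e_def D_def by simp
  qed
  have fact_split: "fact (k0 + p * i) = (of_nat p ^ i * fact i * D i :: rat)" for i
  proof -
    have "(k0 + p * i) div p = i"
      using k0 by simp
    then have "fact (k0 + p * i) = p ^ i * fact i * fact_coprime p (k0 + p * i)"
      using fact_eq_fact_coprime[OF p2, of "k0 + p * i"] by simp
    then show ?thesis
      unfolding D_def by (metis of_nat_fact of_nat_mult of_nat_power)
  qed
  have summand: "fact J * (of_nat p ^ (J - j) / (fact (k0 + p * (J - j)) * fact j))
      = of_nat (J choose j) * (1 / D (J - j))" if "j \<le> J" for j
  proof -
    note fact_split[of "J - j"]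
    moreover have "fact J = (fact j * fact (J - j) * of_nat (J choose j) :: rat)"
      using binomial_fact_lemma[OF that] by (metis of_nat_fact of_nat_mult)
    moreover have "D (J - j) \<noteq> 0"
      unfolding D_def using prime_not_dvd_fact_coprime[OF p] by (metis dvd_0_right of_nat_eq_0_iff)
    moreover have "(of_nat p :: rat) ^ (J - j) \<noteq> 0"
      using p2 by simp
    ultimately show ?thesis
      by (simp add: field_simps)
  qed
  have inverse_D: "1 / D i = (-1) ^ i / fact k0 + of_nat p * e i" for i
    unfolding e_def using p2 by simp
  have "fact J * (\<Sum>j\<le>J. of_nat p ^ (J - j) / (fact (k0 + p * (J - j)) * fact j))
      = (\<Sum>j\<le>J. of_nat (J choose j) * (1 / D (J - j)))"
    unfolding sum_distrib_left by (rule sum.cong[OF refl], rule summand) simp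
  also have "\<dots> = (\<Sum>j\<le>J. of_nat (J choose j) * (-1) ^ (J - j)) / fact k0
      + of_nat p * (\<Sum>j\<le>J. of_nat (J choose j) * e (J - j))"
    by (simp add: inverse_D ring_distribs sum.distrib sum_distrib_left sum_divide_distrib mult_ac)
  also have "(\<Sum>j\<le>J. of_nat (J choose j) * (-1) ^ (J - j)) = (0 :: rat)"
    using binomial_ring[of 1 "-1 :: rat" J] J by (simp add: power_0_left)
  finally show ?thesis
    using p2 J e by (auto intro!: loc_int_sum[OF p] loc_int_mult[OF p] loc_int_of_nat[OF p])
qed

section \<open>The generating functions\<close>

lemma fps_linear_ode_unique:
  fixes A B g :: "'a::field_char_0 fps"
  assumes "fps_deriv A = A * g" "fps_deriv B = B * g" "A $ 0 = B $ 0"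
  shows "A = B"
proof -
  define D where "D = A - B"
  have deriv_D: "fps_deriv D = D * g"
    unfolding D_def using assms(1,2) by (simp add: algebra_simps)
  have "D $ n = 0" for n
  proof (induction n rule: less_induct)
    case (less n)
    show ?case
    proof (cases n)
      case (Suc k)
      have "of_nat (Suc k) * D $ Suc k = (D * g) $ k"
        using arg_cong[OF deriv_D, of "\<lambda>F. F $ k"] by (simp add: fps_deriv_nth mult.commute)
      also have "\<dots> = 0"
        unfolding fps_mult_nth using less.IH Suc by (intro sum.neutral) auto
      finally show ?thesis
        using Suc by (simp del: of_nat_Suc)
    qed (simp add: D_def assms(3))
  qed
  then show ?thesis
    unfolding D_def by (simp add: fps_eq_iff)
qed

lemma fps_exp_compose_add:
  fixes G H :: "'a::field_char_0 fps"
  assumes "G $ 0 = 0" "H $ 0 = 0"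
  shows "fps_exp 1 oo (G + H) = (fps_exp 1 oo G) * (fps_exp 1 oo H)"
proof (rule fps_linear_ode_unique)
  have deriv: "fps_deriv (fps_exp 1 oo F) = (fps_exp 1 oo F) * fps_deriv F" if "F $ 0 = 0" for F :: "'a fps"
    using fps_compose_deriv[OF that, of "fps_exp 1"] by simp
  show "fps_deriv (fps_exp 1 oo (G + H)) = (fps_exp 1 oo (G + H)) * fps_deriv (G + H)"
    using assms by (intro deriv) simp
  show "fps_deriv ((fps_exp 1 oo G) * (fps_exp 1 oo H)) = (fps_exp 1 oo G) * (fps_exp 1 oo H) * fps_deriv (G + H)"
    using deriv[OF assms(1)] deriv[OF assms(2)] by (simp add: algebra_simps)
qed simp

lemma fps_compose_X_power_nth:
  fixes F :: "'a::comm_ring_1 fps"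
  assumes "0 < p"
  shows "(F oo fps_X ^ p) $ n = (if p dvd n then F $ (n div p) else 0)"
proof -
  have "((fps_X ^ p) ^ i :: 'a fps) $ n = (if i = n div p \<and> p dvd n then 1 else 0)" for i
    using assms by (auto simp flip: power_mult)
  then have "(F oo fps_X ^ p) $ n = (\<Sum>i = 0..n. if i = n div p then (if p dvd n then F $ i else 0) else 0)"
    unfolding fps_compose_nth by (intro sum.cong) auto
  then show ?thesis
    by (simp add: div_le_dividend)
qed

lemma fps_mult_compose_X_power_nth:
  fixes A B :: "'a::comm_ring_1 fps"
  assumes p: "0 < p"
  shows "(A * (B oo fps_X ^ p)) $ n = (\<Sum>j\<le>n div p. A $ (n - p * j) * B $ j)"
proof -
  have "(A * (B oo fps_X ^ p)) $ n = ((B oo fps_X ^ p) * A) $ n"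
    by (simp only: mult.commute)
  also have "\<dots> = (\<Sum>i = 0..n. if p dvd i then A $ (n - i) * B $ (i div p) else 0)"
    unfolding fps_mult_nth by (rule sum.cong) (simp_all add: fps_compose_X_power_nth[OF p])
  also have "\<dots> = (\<Sum>i\<in>{i\<in>{0..n}. p dvd i}. A $ (n - i) * B $ (i div p))"
    by (rule sum.inter_filter[symmetric]) simp
  also have "{i\<in>{0..n}. p dvd i} = (\<lambda>j. p * j) ` {..n div p}"
  proof -
    have "p * j \<le> n \<longleftrightarrow> j \<le> n div p" for j
      using p by (simp add: less_eq_div_iff_mult_less_eq mult.commute)
    then show ?thesis
      by (auto elim!: dvdE)
  qed
  also have "(\<Sum>i\<in>(\<lambda>j. p * j) ` {..n div p}. A $ (n - i) * B $ (i div p)) = (\<Sum>j\<le>n div p. A $ (n - p * j) * B $ j)"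
    using p by (subst sum.reindex) (auto simp: inj_on_def)
  finally show ?thesis .
qed

lemma fps_compose_const_mult_X_power:
  fixes c :: "'a::idom fps"
  assumes "c $ 0 = 0"
  shows "(fps_const a * fps_X ^ k) oo c = fps_const a * c ^ k"
  using fps_compose_mult_distrib[OF assms, of "fps_const a" "fps_X ^ k"]
    fps_compose_power[OF assms, of fps_X k] fps_X_fps_compose_startby0[OF assms]
  by simp

definition theta :: "nat \<Rightarrow> 'a::field_char_0 \<Rightarrow> 'a fps" where
  "theta p w = fps_exp w * (fps_exp (- w) oo fps_X ^ p)"

lemma theta_nth:
  "0 < p \<Longrightarrow> theta p w $ k = (\<Sum>j\<le>k div p. w ^ (k - p * j) / fact (k - p * j) * ((- w) ^ j / fact j))"
  unfolding theta_def by (simp add: fps_mult_compose_X_power_nth fps_exp_nth)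

lemma theta_nth_less: "k < p \<Longrightarrow> theta p w $ k = w ^ k / fact k"
  by (simp add: theta_nth)

lemma lam_0: "lam p 0 w n = (if n = 0 then 1 else 0)"
  unfolding lam_def by (simp add: fps_compose_0_right)

lemma fps_exp_compose_Suc:
  fixes w :: "'a::field_char_0"
  assumes p: "0 < p"
  defines "G m \<equiv> fps_const w * fps_X - fps_const w * fps_X ^ (p ^ m)"
  shows "fps_exp 1 oo G (Suc m) = theta p w * ((fps_exp 1 oo G m) oo fps_X ^ p)"
proof -
  define L where "L = fps_const (- w) * fps_X ^ 1"
  have X0: "(fps_X ^ p :: 'a fps) $ 0 = 0" and L0: "L $ 0 = 0" and G0: "G m $ 0 = 0"
    using p unfolding L_def G_def by simp_all
  have "L oo fps_X ^ p = fps_const (- w) * fps_X ^ p"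
    unfolding L_def fps_compose_const_mult_X_power[OF X0] by simp
  moreover have "G m oo fps_X ^ p = fps_const w * fps_X ^ p - fps_const w * fps_X ^ (p ^ Suc m)"
    using fps_compose_const_mult_X_power[OF X0, of w 1] fps_compose_const_mult_X_power[OF X0, of w "p ^ m"]
    unfolding G_def fps_compose_sub_distrib by (simp add: mult.commute flip: power_mult)
  ultimately have "G (Suc m) = fps_const w * fps_X + ((L oo fps_X ^ p) + (G m oo fps_X ^ p))"
    unfolding G_def by (simp add: fps_const_neg)
  then have "fps_exp 1 oo G (Suc m)
      = (fps_exp 1 oo fps_const w * fps_X) * ((fps_exp 1 oo (L oo fps_X ^ p)) * (fps_exp 1 oo (G m oo fps_X ^ p)))"
    using L0 G0 X0 by (simp add: fps_exp_compose_add)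
  also have "\<dots> = theta p w * ((fps_exp 1 oo G m) oo fps_X ^ p)"
    unfolding theta_def L_def by (simp add: fps_compose_assoc[OF X0] G0 mult.assoc)
  finally show ?thesis .
qed

lemma lam_Suc:
  assumes "0 < p"
  shows "lam p (Suc m) w n = (\<Sum>j\<le>n div p. theta p w $ (n - p * j) * lam p m w j)"
  unfolding lam_def fps_exp_compose_Suc[OF assms] by (rule fps_mult_compose_X_power_nth[OF assms])

section \<open>Valuations of the coefficients\<close>

definition lam_leading :: "nat \<Rightarrow> nat \<Rightarrow> 'a::field_char_0 \<Rightarrow> nat \<Rightarrow> 'a" where
  "lam_leading p m w n = (if n < p ^ m then w ^ digit_sum p n / of_nat (digit_fact p n) else 0)"

lemma of_rat_fact [simp]: "of_rat (fact n) = fact n"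
  by (metis of_nat_fact of_rat_of_nat_eq)

locale dwork_pi =
  fixes p :: nat and w :: "'a::field_char_0"
  assumes prime: "prime p" and pi_power: "w ^ (p - 1) + of_nat p = 0"
begin

lemma p_ge_2: "2 \<le> p"
  using prime prime_ge_2_nat by blast

lemma pi_power_p_minus_1: "w ^ (p - 1) = - of_nat p"
  using pi_power by (simp add: eq_neg_iff_add_eq_0)

lemma pi_power_mult_p_minus_1: "w ^ ((p - 1) * e) = (- of_nat p) ^ e"
  by (simp only: power_mult pi_power_p_minus_1)

lemma pow_dvd_power_div_fact: "pow_dvd p w (digit_sum p n) (w ^ n / fact n)"
proof -
  define e where "e = multiplicity p (fact n :: nat)"
  have "fact n \<noteq> (0 :: nat)" "\<not> is_unit p"
    using prime by auto
  then obtain u where u: "fact n = p ^ e * u" "\<not> p dvd u"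
    unfolding e_def using multiplicity_decompose' by metis
  have "w ^ n = w ^ digit_sum p n * ((-1) ^ e * of_nat p ^ e)"
    using digit_sum_multiplicity_fact[OF prime, of n]
    by (metis e_def power_add pi_power_mult_p_minus_1 power_minus)
  moreover have "(fact n :: 'a) = of_nat p ^ e * of_nat u"
    by (metis u(1) of_nat_fact of_nat_mult of_nat_power)
  moreover have "(of_nat p :: 'a) \<noteq> 0"
    using p_ge_2 by simp
  ultimately have "w ^ n / fact n = w ^ digit_sum p n * ((-1) ^ e / of_nat u)"
    by simp
  also have "\<dots> = w ^ digit_sum p n * of_rat ((-1) ^ e * (1 / of_nat u))"
    by (simp add: of_rat_mult of_rat_divide of_rat_power of_rat_minus)
  moreover have "loc_int p ((-1) ^ e * (1 / of_nat u))"
    using u(2) by (intro loc_int_mult[OF prime] loc_int_power[OF prime] loc_int_minus[OF prime]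
        loc_int_1[OF prime] loc_int_inverse_of_nat[OF prime])
  ultimately show ?thesis
    using pow_dvd_of_rat[OF prime] by simp
qed

lemma pow_dvd_theta_nth:
  assumes "p \<le> k"
  shows "pow_dvd p w (digit_sum p k + p - 1) (theta p w $ k)"
proof -
  define J k0 where "J = k div p" and "k0 = k mod p"
  have k0: "k0 < p" and k: "k = k0 + p * J"
    using p_ge_2 unfolding J_def k0_def by simp_all
  have J: "1 \<le> J"
    using div_le_mono[OF assms, of p] p_ge_2 unfolding J_def by simp
  define R :: rat where "R = (\<Sum>j\<le>J. of_nat p ^ (J - j) / (fact (k0 + p * (J - j)) * fact j))"
  define u where "u = fact J * R / of_nat p"
  have summand: "w ^ (k - p * j) / fact (k - p * j) * ((- w) ^ j / fact j)
      = (-1) ^ J * w ^ (k0 + J) * of_rat (of_nat p ^ (J - j) / (fact (k0 + p * (J - j)) * fact j))"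
    if "j \<le> J" for j
  proof -
    define i where "i = J - j"
    have "k - p * j = k0 + p * i" "J = j + i"
      using that k unfolding i_def by (simp_all add: diff_mult_distrib2)
    have "(p - 1) * i + i = p * i"
      using p_ge_2 by (cases p) auto
    then have exponent: "k0 + p * i + j = k0 + J + (p - 1) * i"
      using \<open>J = j + i\<close> by linarith
    have "w ^ (k0 + p * i) * (- w) ^ j = (-1) ^ j * w ^ (k0 + p * i + j)"
      by (simp add: power_minus[of w] power_add mult_ac)
    also have "\<dots> = (-1) ^ j * w ^ (k0 + J + (p - 1) * i)"
      by (simp only: exponent)
    also have "\<dots> = (-1) ^ J * w ^ (k0 + J) * of_nat p ^ i"
      unfolding power_add pi_power_mult_p_minus_1 power_minus[of "of_nat p"] \<open>J = j + i\<close> by (simp add: mult_ac)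
    finally show ?thesis
      unfolding \<open>k - p * j = k0 + p * i\<close> i_def[symmetric]
      by (simp add: of_rat_divide of_rat_mult of_rat_power)
  qed
  have "theta p w $ k = (-1) ^ J * w ^ (k0 + J) * of_rat R"
    unfolding theta_nth[OF prime_gt_0_nat[OF prime]] R_def of_rat_sum sum_distrib_left J_def[symmetric]
    by (rule sum.cong[OF refl], rule summand) simp
  also have "\<dots> = w ^ k0 * (w ^ J / fact J) * (w ^ (p - 1) * of_rat (- ((-1) ^ J * u)))"
  proof -
    have "of_nat p * of_rat u = fact J * (of_rat R :: 'a)"
      unfolding u_def using p_ge_2 by (simp add: of_rat_divide of_rat_mult)
    then have "w ^ (p - 1) * of_rat (- ((-1) ^ J * u)) = (-1) ^ J * (fact J * of_rat R)"
      unfolding pi_power_p_minus_1 of_rat_minus of_rat_mult of_rat_power by (simp flip: mult.assoc)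
    then show ?thesis
      by (simp add: power_add)
  qed
  finally have "theta p w $ k = w ^ k0 * (w ^ J / fact J) * (w ^ (p - 1) * of_rat (- ((-1) ^ J * u)))" .
  moreover have "loc_int p (- ((-1) ^ J * u))"
    using loc_int_fact_sum_div_prime[OF prime k0 J] unfolding u_def R_def
    by (intro loc_int_minus[OF prime] loc_int_mult[OF prime] loc_int_power[OF prime] loc_int_1[OF prime])
  then have "pow_dvd p w (k0 + digit_sum p J + (p - 1))
      (w ^ k0 * (w ^ J / fact J) * (w ^ (p - 1) * of_rat (- ((-1) ^ J * u))))"
    by (intro pow_dvd_mult[OF prime] pow_dvd_power[OF prime] pow_dvd_power_div_fact pow_dvd_of_rat[OF prime])
  moreover have "k0 + digit_sum p J + (p - 1) = digit_sum p k + p - 1"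
    using digit_sum_mod_div[OF p_ge_2, of k] p_ge_2 unfolding J_def k0_def by simp
  ultimately show ?thesis
    by simp
qed

lemma pow_dvd_lam_leading: "pow_dvd p w (digit_sum p n) (lam_leading p m w n)"
proof -
  have "loc_int p (1 / of_nat (digit_fact p n))"
    by (rule loc_int_inverse_of_nat[OF prime prime_not_dvd_digit_fact[OF prime]])
  then have "pow_dvd p w (digit_sum p n) (w ^ digit_sum p n * of_rat (1 / of_nat (digit_fact p n)))"
    by (rule pow_dvd_of_rat[OF prime])
  then show ?thesis
    unfolding lam_leading_def by (simp add: of_rat_divide pow_dvd_0[OF prime])
qed

lemma lam_leading_Suc:
  "lam_leading p (Suc m) w n = theta p w $ (n mod p) * lam_leading p m w (n div p)"
proof -
  have "n < p ^ Suc m \<longleftrightarrow> n div p < p ^ m"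
    using p_ge_2 by (simp add: div_less_iff_less_mult mult.commute)
  moreover have "digit_sum p n = n mod p + digit_sum p (n div p)"
    "digit_fact p n = fact (n mod p) * digit_fact p (n div p)"
    by (rule digit_sum_mod_div[OF p_ge_2], rule digit_fact_mod_div[OF p_ge_2])
  moreover have "theta p w $ (n mod p) = w ^ (n mod p) / fact (n mod p)"
    using p_ge_2 by (simp add: theta_nth_less)
  ultimately show ?thesis
    unfolding lam_leading_def by (simp add: power_add)
qed

lemma pow_dvd_lam_Suc_tail:
  assumes lam: "\<And>j. pow_dvd p w (digit_sum p j) (lam p m w j)"
  shows "pow_dvd p w (digit_sum p n + p - 1) (\<Sum>j<n div p. theta p w $ (n - p * j) * lam p m w j)"
proof (rule pow_dvd_sum[OF prime])
  fix j assume "j \<in> {..<n div p}"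
  then have j: "j < n div p" by simp
  have n_pj: "n - p * j = n mod p + p * (n div p - j)"
    using j by (simp add: diff_mult_distrib2 mod_div_decomp)
  have "p * 1 \<le> p * (n div p - j)"
    using j by (intro mult_le_mono2) simp
  then have "p \<le> n - p * j"
    unfolding n_pj by linarith
  then have product: "pow_dvd p w (digit_sum p (n - p * j) + p - 1 + digit_sum p j)
      (theta p w $ (n - p * j) * lam p m w j)"
    by (intro pow_dvd_mult[OF prime] pow_dvd_theta_nth lam)
  have "digit_sum p n \<le> digit_sum p (n - p * j) + digit_sum p j"
  proof -
    have "digit_sum p (n div p) \<le> digit_sum p (n div p - j) + digit_sum p j"
      using digit_sum_add_le[OF prime, of "n div p - j" j] j by simp
    moreover have "digit_sum p (n mod p + p * (n div p - j)) = n mod p + digit_sum p (n div p - j)"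
      using digit_sum_mod_div[OF p_ge_2, of "n mod p + p * (n div p - j)"] p_ge_2 by simp
    ultimately show ?thesis
      unfolding n_pj using digit_sum_mod_div[OF p_ge_2, of n] by simp
  qed
  then show "pow_dvd p w (digit_sum p n + p - 1) (theta p w $ (n - p * j) * lam p m w j)"
    using p_ge_2 by (intro pow_dvd_mono[OF prime _ product]) linarith
qed

lemma pow_dvd_lam_sub_leading: "pow_dvd p w (digit_sum p n + p - 1) (lam p m w n - lam_leading p m w n)"
proof (induction m arbitrary: n)
  case 0
  then show ?case
    by (simp add: lam_0 lam_leading_def digit_sum_def digit_fact_def pow_dvd_0[OF prime])
next
  case (Suc m)
  have lam: "pow_dvd p w (digit_sum p j) (lam p m w j)" for j
  proof -
    have "pow_dvd p w (digit_sum p j) (lam p m w j - lam_leading p m w j)"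
      using p_ge_2 by (intro pow_dvd_mono[OF prime _ Suc.IH]) simp
    from pow_dvd_add[OF prime this pow_dvd_lam_leading[of _ m]] show ?thesis
      by simp
  qed
  have "lam p (Suc m) w n = theta p w $ (n mod p) * lam p m w (n div p)
      + (\<Sum>j<n div p. theta p w $ (n - p * j) * lam p m w j)"
    using lam_Suc[of p m w n] p_ge_2
      sum.lessThan_Suc[of "\<lambda>j. theta p w $ (n - p * j) * lam p m w j" "n div p", unfolded lessThan_Suc_atMost]
    by (simp add: minus_mult_div_eq_mod)
  then have "lam p (Suc m) w n - lam_leading p (Suc m) w n
      = theta p w $ (n mod p) * (lam p m w (n div p) - lam_leading p m w (n div p))
        + (\<Sum>j<n div p. theta p w $ (n - p * j) * lam p m w j)"
    by (simp add: lam_leading_Suc algebra_simps)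
  moreover have "pow_dvd p w (n mod p + (digit_sum p (n div p) + p - 1))
      (theta p w $ (n mod p) * (lam p m w (n div p) - lam_leading p m w (n div p)))"
    using pow_dvd_power_div_fact[of "n mod p"] p_ge_2
    by (intro pow_dvd_mult[OF prime] Suc.IH) (simp_all add: theta_nth_less digit_sum_less)
  moreover have "n mod p + (digit_sum p (n div p) + p - 1) = digit_sum p n + p - 1"
    using digit_sum_mod_div[OF p_ge_2, of n] p_ge_2 by simp
  ultimately show ?case
    using pow_dvd_add[OF prime _ pow_dvd_lam_Suc_tail[OF lam]] by simp
qed

end

theorem lemma1p1:
  fixes p m :: nat and varpi :: "'a::field_char_0"
  assumes "prime p"
    and "varpi ^ (p - 1) + of_nat p = 0"
  shows "\<forall>n.
    (n \<le> p ^ m - 1 \<longrightarrow>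
       pcong p varpi (digit_sum p n + p - 1) (lam p m varpi n)
         (varpi ^ digit_sum p n / of_nat (digit_fact p n))) \<and>
    (n \<ge> p ^ m \<longrightarrow>
       pcong p varpi (digit_sum p n + p - 1) (lam p m varpi n) 0)"
proof -
  interpret dwork_pi p varpi
    using assms by unfold_locales
  have "0 < p ^ m"
    using p_ge_2 by simp
  show ?thesis
    unfolding pcong_iff_pow_dvd
  proof (intro allI conjI impI)
    fix n
    assume "n \<le> p ^ m - 1"
    with \<open>0 < p ^ m\<close> have "n < p ^ m"
      by linarith
    then show "pow_dvd p varpi (digit_sum p n + p - 1)
        (lam p m varpi n - varpi ^ digit_sum p n / of_nat (digit_fact p n))"
      using pow_dvd_lam_sub_leading[of n m] unfolding lam_leading_def by simp
  next
    fix n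
    assume "p ^ m \<le> n"
    then show "pow_dvd p varpi (digit_sum p n + p - 1) (lam p m varpi n - 0)"
      using pow_dvd_lam_sub_leading[of n m] unfolding lam_leading_def by simp
  qed
qed

end
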